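(* Let $a,b>0$ and let $f,g:\mathbb{R}\to(0,\infty)$. If both $f(x)$ and $g(x)/f(x)$ are monotonically increasing in $x$, then for any $x_1<x_2$, $$\frac{b+g(x_1)}{a+f(x_1)}\le\frac ba\vee\frac{b+g(x_2)}{a+f(x_2)}.$$ Provided that $\lim_{x\to\infty}(b+g(x))/(a+f(x))$ exists, for any $x_0\in\mathbb{R}$, $$\frac{b+g(x_0)}{a+f(x_0)}\le\frac ba\vee\lim_{x\to\infty}\frac{b+g(x)}{a+f(x)}.$$
   Context: $u\vee v=\max(u,v)$; "monotonically increasing" means non-decreasing. *)

theory Defs
  imports "HOL-Analysis.Analysis"
begin

end

theory Submission
  imports Defs
begin

text \<open>Writing \<open>r = g / f\<close>, the quotient \<open>(b + g) / (a + f) = (b + r * f) / (a + f)\<close> is the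
  mediant of \<open>b / a\<close> and \<open>r\<close> with weights \<open>a\<close> and \<open>f\<close>, so it lies between them. If
  \<open>r \<le> b / a\<close> it is therefore at most \<open>b / a\<close>; otherwise \<open>r > b / a\<close>, and then the mediant
  increases both with the weight \<open>f\<close> on \<open>r\<close> and with \<open>r\<close> itself, which \<open>x1 < x2\<close> provides.
  The second claim follows by letting \<open>x2\<close> tend to infinity.\<close>

lemma mediant_le_left:
  fixes a b f r :: real
  assumes "a > 0" "f \<ge> 0" "a * r \<le> b"
  shows "(b + r * f) / (a + f) \<le> b / a"
proof -
  have "a * (r * f) \<le> b * f"
    using mult_right_mono[OF assms(3) assms(2)] by (simp add: mult.assoc)
  then have "(b + r * f) * a \<le> b * (a + f)"
    by (simp add: algebra_simps)
  then show ?thesis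
    using assms by (simp add: pos_divide_le_eq pos_le_divide_eq mult.commute)
qed

lemma mediant_mono_weight:
  fixes a b f1 f2 r :: real
  assumes "a > 0" "f1 \<ge> 0" "f1 \<le> f2" "b \<le> a * r"
  shows "(b + r * f1) / (a + f1) \<le> (b + r * f2) / (a + f2)"
proof -
  have "(b + r * f2) * (a + f1) - (b + r * f1) * (a + f2) = (a * r - b) * (f2 - f1)"
    by (simp add: algebra_simps)
  also have "\<dots> \<ge> 0"
    using assms by simp
  finally have "(b + r * f1) * (a + f2) \<le> (b + r * f2) * (a + f1)"
    by simp
  then show ?thesis
    using assms by (simp add: pos_divide_le_eq pos_le_divide_eq mult.commute)
qed

lemma mediant_mono_ratio:
  fixes a b f r1 r2 :: real
  assumes "a > 0" "f \<ge> 0" "r1 \<le> r2"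
  shows "(b + r1 * f) / (a + f) \<le> (b + r2 * f) / (a + f)"
  using assms by (intro divide_right_mono add_left_mono mult_right_mono) auto

lemma mediant_le_max:
  fixes a b f1 f2 r1 r2 :: real
  assumes "a > 0" "f1 \<ge> 0" "f1 \<le> f2" "r1 \<le> r2"
  shows "(b + r1 * f1) / (a + f1) \<le> max (b / a) ((b + r2 * f2) / (a + f2))"
proof (cases "a * r1 \<le> b")
  case True
  then show ?thesis
    using mediant_le_left[OF assms(1,2)] by (simp add: le_max_iff_disj)
next
  case False
  have "(b + r1 * f1) / (a + f1) \<le> (b + r1 * f2) / (a + f2)"
    using False assms by (intro mediant_mono_weight) auto
  also have "\<dots> \<le> (b + r2 * f2) / (a + f2)"
    using assms by (intro mediant_mono_ratio) auto
  finally show ?thesis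
    by (simp add: le_max_iff_disj)
qed

lemma le_max_tendsto_at_top:
  fixes h :: "'a::linorder \<Rightarrow> 'b::linorder_topology"
  assumes "(h \<longlongrightarrow> L) at_top" "\<And>x. x0 \<le> x \<Longrightarrow> h x0 \<le> max c (h x)"
  shows "h x0 \<le> max c L"
proof (rule tendsto_lowerbound)
  show "((\<lambda>x. max c (h x)) \<longlongrightarrow> max c L) at_top"
    using assms(1) by (intro tendsto_max tendsto_const)
  show "\<forall>\<^sub>F x in at_top. h x0 \<le> max c (h x)"
    using eventually_ge_at_top[of x0] by eventually_elim (rule assms(2))
qed simp

theorem lemma11:
  fixes a b :: real and f g :: "real \<Rightarrow> real"
  assumes "a > 0" and "b > 0"
    and "\<And>x. f x > 0" and "\<And>x. g x > 0"
    and "mono f" and "mono (\<lambda>x. g x / f x)"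
  shows "(\<forall>x1 x2. x1 < x2 \<longrightarrow>
            (b + g x1) / (a + f x1) \<le> max (b / a) ((b + g x2) / (a + f x2)))
       \<and> (\<forall>L. ((\<lambda>x. (b + g x) / (a + f x)) \<longlongrightarrow> L) at_top \<longrightarrow>
            (\<forall>x0. (b + g x0) / (a + f x0) \<le> max (b / a) L))"
proof -
  have g_eq: "g x = g x / f x * f x" for x
    using assms(3)[of x] by simp
  have step: "(b + g x1) / (a + f x1) \<le> max (b / a) ((b + g x2) / (a + f x2))"
    if "x1 \<le> x2" for x1 x2
  proof -
    have "(b + g x1 / f x1 * f x1) / (a + f x1)
        \<le> max (b / a) ((b + g x2 / f x2 * f x2) / (a + f x2))"
      using assms(1,3) monoD[OF assms(5) that] monoD[OF assms(6) that]
      by (intro mediant_le_max) (auto simp: less_imp_le)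
    then show ?thesis
      using g_eq[of x1] g_eq[of x2] by simp
  qed
  show ?thesis
    using step le_max_tendsto_at_top[where h = "\<lambda>x. (b + g x) / (a + f x)"] by auto
qed

end
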